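(* Let $S=s_1,\ldots,s_n$ be a sequence of positive real numbers, let $\alpha>1$, $\gamma>0$, and let $k$ be a positive integer. Let $\beta>0$ and let $L=\ell_1,\ldots,\ell_n$ be an optimal level sequence for $\textsc{Exp}(\alpha,\beta)$. Define \[ \beta'=\frac{n}{\sum_{i=1}^n s_i\alpha^{\ell_i}}. \] Let $\beta^*$ be the optimal parameter of $\textsc{Exp}(\alpha)$ (i.e., $(L^*,\beta^* )$ is an optimal solution of $\textsc{Exp}(\alpha)$ for some $L^*$). Then either $\beta^*\le\min(\beta,\beta')$ or $\beta^*\ge\max(\beta,\beta')$.
   Context: A level sequence is $L=\ell_1,\ldots,\ell_n$ of integers with $0\le\ell_i\le k$; set $\ell_0=0$. The penalty is $\mathrm{pen}(x,y)=\max(y-x,0)\,\gamma\log n$; $p_{\exp}(s;\lambda)=\lambda e^{-\lambda s}$; $\mathrm{score}_{\exp}(L,S;\alpha,\beta,\gamma)=\sum_{i=1}^n\big[-\log p_{\exp}(s_i;\beta\alpha^{\ell_i})+\mathrm{pen}(\ell_{i-1},\ell_i)\big]$. Problem $\textsc{Exp}(\alpha,\beta)$: given $S,\alpha,\beta,\gamma,k$, find a level sequence $L$ minimizing $\mathrm{score}_{\exp}(L,S;\alpha,\beta,\gamma)$. Problem $\textsc{Exp}(\alpha)$: given $S,\alpha,\gamma,k$, find a level sequence $L$ and $\beta>0$ minimizing $\mathrm{score}_{\exp}(L,S;\alpha,\beta,\gamma)$. *)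

theory Defs
  imports Complex_Main
begin

text \<open>Sequences are indexed 1..n: S i, L i for i in {1..n}. The level before
position 1 is 0.\<close>

definition level_seq :: "nat \<Rightarrow> nat \<Rightarrow> (nat \<Rightarrow> nat) \<Rightarrow> bool" where
  "level_seq n k L \<longleftrightarrow> (\<forall>i\<in>{1..n}. L i \<le> k)"

definition prev_level :: "(nat \<Rightarrow> nat) \<Rightarrow> nat \<Rightarrow> nat" where
  "prev_level L i = (if i = 0 then 0 else L i)"

definition pen :: "nat \<Rightarrow> real \<Rightarrow> nat \<Rightarrow> nat \<Rightarrow> real" where
  "pen n \<gamma> x y = max (real y - real x) 0 * \<gamma> * ln (real n)"

definition p_exp :: "real \<Rightarrow> real \<Rightarrow> real" where
  "p_exp s lam = lam * exp (- lam * s)"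

definition score_exp ::
  "nat \<Rightarrow> (nat \<Rightarrow> nat) \<Rightarrow> (nat \<Rightarrow> real) \<Rightarrow> real \<Rightarrow> real \<Rightarrow> real \<Rightarrow> real" where
  "score_exp n L S \<alpha> \<beta> \<gamma> =
     (\<Sum>i=1..n. - ln (p_exp (S i) (\<beta> * \<alpha> ^ L i)) + pen n \<gamma> (prev_level L (i - 1)) (L i))"

definition opt_exp_ab ::
  "nat \<Rightarrow> (nat \<Rightarrow> real) \<Rightarrow> real \<Rightarrow> real \<Rightarrow> real \<Rightarrow> nat \<Rightarrow> (nat \<Rightarrow> nat) \<Rightarrow> bool" where
  "opt_exp_ab n S \<alpha> \<beta> \<gamma> k L \<longleftrightarrow> level_seq n k L \<and>
     (\<forall>L'. level_seq n k L' \<longrightarrow> score_exp n L S \<alpha> \<beta> \<gamma> \<le> score_exp n L' S \<alpha> \<beta> \<gamma>)"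

definition opt_exp_a ::
  "nat \<Rightarrow> (nat \<Rightarrow> real) \<Rightarrow> real \<Rightarrow> real \<Rightarrow> nat \<Rightarrow> (nat \<Rightarrow> nat) \<Rightarrow> real \<Rightarrow> bool" where
  "opt_exp_a n S \<alpha> \<gamma> k L \<beta> \<longleftrightarrow> level_seq n k L \<and> \<beta> > 0 \<and>
     (\<forall>L' \<beta>'. level_seq n k L' \<and> \<beta>' > 0 \<longrightarrow>
        score_exp n L S \<alpha> \<beta> \<gamma> \<le> score_exp n L' S \<alpha> \<beta>' \<gamma>)"

end

theory Submission
  imports Defs
begin

text \<open>For \<open>\<beta> > 0\<close> the score is \<open>-n ln \<beta> + \<beta> T(L) + C(L)\<close>, with the weighted mass
  \<open>T(L) = \<Sum> s\<^sub>i \<alpha>\<^bsup>\<ell>\<^sub>i\<^esup>\<close> and a cost \<open>C(L)\<close> independent of \<open>\<beta>\<close>. Hence the optimal \<open>\<beta>\<close> for a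
  fixed level sequence is \<open>n / T(L)\<close>, so \<open>\<beta>' = n / T(L)\<close> and \<open>\<beta>\<^sup>* = n / T(L\<^sup>*)\<close>.
  Comparing the optimality of \<open>L\<close> at \<open>\<beta>\<close> with that of \<open>L\<^sup>*\<close> at \<open>\<beta>\<^sup>*\<close> gives the exchange
  inequality \<open>(\<beta> - \<beta>\<^sup>*) (T(L) - T(L\<^sup>*)) \<le> 0\<close>, i.e. \<open>(\<beta> - \<beta>\<^sup>*) (\<beta>\<^sup>* - \<beta>') \<le> 0\<close>:
  \<open>\<beta>\<^sup>*\<close> does not lie strictly between \<open>\<beta>\<close> and \<open>\<beta>'\<close>.\<close>

definition weighted_mass :: "nat \<Rightarrow> (nat \<Rightarrow> real) \<Rightarrow> real \<Rightarrow> (nat \<Rightarrow> nat) \<Rightarrow> real" where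
  "weighted_mass n S \<alpha> L = (\<Sum>i=1..n. S i * \<alpha> ^ L i)"

definition level_cost :: "nat \<Rightarrow> real \<Rightarrow> real \<Rightarrow> (nat \<Rightarrow> nat) \<Rightarrow> real" where
  "level_cost n \<alpha> \<gamma> L =
     (\<Sum>i=1..n. pen n \<gamma> (prev_level L (i - 1)) (L i) - real (L i) * ln \<alpha>)"

lemma weighted_mass_pos:
  assumes "n \<ge> 1" "\<forall>i\<in>{1..n}. S i > 0" "\<alpha> > 0"
  shows "weighted_mass n S \<alpha> L > 0"
  unfolding weighted_mass_def using assms by (intro sum_pos) auto

lemma neg_ln_p_exp:
  assumes "b > 0" "\<alpha> > 0"
  shows "- ln (p_exp s (b * \<alpha> ^ l)) = - ln b + b * (s * \<alpha> ^ l) - real l * ln \<alpha>"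
proof -
  have "ln (p_exp s (b * \<alpha> ^ l)) = ln (b * \<alpha> ^ l) - b * \<alpha> ^ l * s"
    unfolding p_exp_def using assms by (simp add: ln_mult)
  also have "ln (b * \<alpha> ^ l) = ln b + real l * ln \<alpha>"
    using assms by (simp add: ln_mult ln_realpow)
  finally show ?thesis by (simp add: algebra_simps)
qed

lemma score_exp_eq:
  assumes "b > 0" "\<alpha> > 0"
  shows "score_exp n L S \<alpha> b \<gamma> =
           - real n * ln b + b * weighted_mass n S \<alpha> L + level_cost n \<alpha> \<gamma> L"
  unfolding score_exp_def weighted_mass_def level_cost_def neg_ln_p_exp[OF assms]
  by (simp add: sum.distrib sum_distrib_left sum_subtractf algebra_simps)

lemma neg_ln_plus_linear_strict_min:
  fixes c T b :: real
  assumes "c > 0" "T > 0" "b > 0" "b \<noteq> c / T"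
  shows "- c * ln (c / T) + c / T * T < - c * ln b + b * T"
proof -
  define x where "x = b * T / c"
  have "x > 0" "x \<noteq> 1" using assms by (auto simp: x_def field_simps)
  then have "ln x < x - 1"
    using ln_le_minus_one ln_eq_minus_one by fastforce
  moreover have "ln b = ln x + ln (c / T)"
    using assms \<open>x > 0\<close> ln_mult[of x "c / T"] by (simp add: x_def)
  ultimately show ?thesis using assms by (simp add: x_def field_simps)
qed

lemma opt_exp_a_beta_eq:
  assumes "n \<ge> 1" "\<forall>i\<in>{1..n}. S i > 0" "\<alpha> > 0" "opt_exp_a n S \<alpha> \<gamma> k L b"
  shows "b = real n / weighted_mass n S \<alpha> L"
proof (rule ccontr)
  define T where "T = weighted_mass n S \<alpha> L"
  have "T > 0" unfolding T_def using weighted_mass_pos assms(1-3) .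
  have L: "level_seq n k L" and "b > 0" using assms(4) by (auto simp: opt_exp_a_def)
  assume "b \<noteq> real n / weighted_mass n S \<alpha> L"
  then have "score_exp n L S \<alpha> (real n / T) \<gamma> < score_exp n L S \<alpha> b \<gamma>"
    using neg_ln_plus_linear_strict_min[of "real n" T b] assms(1,3) \<open>T > 0\<close> \<open>b > 0\<close>
    by (simp add: score_exp_eq T_def)
  moreover have "score_exp n L S \<alpha> b \<gamma> \<le> score_exp n L S \<alpha> (real n / T) \<gamma>"
    using assms(1,4) L \<open>T > 0\<close> by (simp add: opt_exp_a_def)
  ultimately show False by simp
qed

lemma score_exp_exchange:
  assumes "b > 0" "b' > 0" "\<alpha> > 0"
    and "score_exp n L S \<alpha> b \<gamma> \<le> score_exp n L' S \<alpha> b \<gamma>"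
    and "score_exp n L' S \<alpha> b' \<gamma> \<le> score_exp n L S \<alpha> b' \<gamma>"
  shows "(b - b') * (weighted_mass n S \<alpha> L - weighted_mass n S \<alpha> L') \<le> 0"
  using assms by (simp add: score_exp_eq algebra_simps)

lemma not_strictly_between:
  fixes x y z :: "'a :: linordered_idom"
  assumes "(x - y) * (y - z) \<le> 0"
  shows "y \<le> min x z \<or> y \<ge> max x z"
proof (rule ccontr)
  assume "\<not> ?thesis"
  then have "(x - y) * (y - z) > 0"
    by (auto simp: min_def max_def mult_pos_pos mult_neg_neg split: if_splits)
  with assms show False by simp
qed

theorem proposition10:
  fixes n k :: nat and S :: "nat \<Rightarrow> real" and \<alpha> \<beta> \<gamma> \<beta>s :: real
    and L Ls :: "nat \<Rightarrow> nat"
  assumes "n \<ge> 1"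
    and "\<forall>i\<in>{1..n}. S i > 0"
    and "\<alpha> > 1" and "\<gamma> > 0" and "k \<ge> 1"
    and "\<beta> > 0"
    and "opt_exp_ab n S \<alpha> \<beta> \<gamma> k L"
    and "opt_exp_a n S \<alpha> \<gamma> k Ls \<beta>s"
  shows "let \<beta>' = real n / (\<Sum>i=1..n. S i * \<alpha> ^ L i)
         in \<beta>s \<le> min \<beta> \<beta>' \<or> \<beta>s \<ge> max \<beta> \<beta>'"
proof -
  have "\<alpha> > 0" using assms(3) by simp
  define T T' where "T = weighted_mass n S \<alpha> L" and "T' = weighted_mass n S \<alpha> Ls"
  have "T > 0" "T' > 0" unfolding T_def T'_def using weighted_mass_pos assms(1,2) \<open>\<alpha> > 0\<close> by auto
  have "\<beta>s > 0" "\<beta>s = real n / T'"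
    using assms(8) opt_exp_a_beta_eq[OF assms(1,2) \<open>\<alpha> > 0\<close> assms(8)]
    by (auto simp: opt_exp_a_def T'_def)
  have "(\<beta> - \<beta>s) * (T - T') \<le> 0"
    unfolding T_def T'_def
    using assms(6-8) \<open>\<beta>s > 0\<close> \<open>\<alpha> > 0\<close>
    by (intro score_exp_exchange) (auto simp: opt_exp_ab_def opt_exp_a_def)
  moreover have "\<beta>s - real n / T = (T - T') * (real n / (T * T'))"
    unfolding \<open>\<beta>s = real n / T'\<close> using \<open>T > 0\<close> \<open>T' > 0\<close> by (simp add: field_simps)
  ultimately have "(\<beta> - \<beta>s) * (\<beta>s - real n / T) \<le> 0"
    using \<open>T > 0\<close> \<open>T' > 0\<close> by (metis divide_nonneg_pos mult_nonpos_nonneg mult.assoc of_nat_0_le_iff mult_pos_pos)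
  then show ?thesis
    using not_strictly_between by (simp add: Let_def T_def weighted_mass_def)
qed

end
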